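(* Let $H$ be a graph labeled by $\mathrm{HL}$-types and let $p\in Pr$ be a primitive type such that $p$ is lonely in $\times(H)$ and $\times(H)$ has no skeleton subtypes. Then $\mathrm{HL}\not\vdash H\to p$.
   Context: Hypergraphs: given labels $C$ with $type:C\to\mathbb{N}$, a graph is $G=\langle V,E,att,lab,ext\rangle$ with finite $V,E$, $att:E\to V^\circledast$ (strings of distinct nodes), $lab:E\to C$ with $type(lab(e))=|att(e)|$, $ext\in V^\circledast$; $type(G)=|ext|$; isomorphic graphs identified. Handle $a^\bullet$: one edge labeled $a$ attached to $v_1\dots v_n$, all external in that order. Replacement $G[e/H]$: remove $e$, insert a disjoint copy of $H$, fuse $i$-th external node of $H$ with $i$-th attachment node of $e$; simultaneous replacement; relabeling $G[e:=a]$. $\mathrm{HL}$: primitive types $Pr$ with $type:Pr\to\mathbb{N}$ (infinitely many of each arity); symbol $\$$ of any arity. Types: primitives; $N\div D$ where $D$ has exactly one edge $d_0$ labeled $\$$, others labeled by types, $type(N)=type(D)$, $type(N\div D)=type_D(d_0)$; $\times(M)$ for a type-labeled graph $M$, $type(\times(M))=type(M)$. Subtypes of a type are the occurrences of types in its inductive construction (the type itself, and recursively the subtypes of $N$ and of the edge labels of $D$ for $N\div D$, and of the edge labels of $M$ for $\times(M)$). Graph sequent $H\to A$ with $type(H)=type(A)$. Axioms $p^\bullet\to p$. Rules: $(\div\to)$: for $N\div D$ with $E_D=\{d_0,\dots,d_k\}$, $e\in E_H$ labeled $N$: from $H\to A$, $H_i\to lab(d_i)$ infer $H[e/D][d_0:=N\div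 D][d_1/H_1,\dots,d_k/H_k]\to A$; $(\to\div)$: from $D[d_0/F]\to N$ infer $F\to N\div D$; $(\times\to)$: if $e\in E_G$ is labeled $\times(F)$, from $G[e/F]\to A$ infer $G\to A$; $(\to\times)$: with $E_M=\{m_1,\dots,m_l\}$, from $H_i\to lab(m_i)$ infer $M[m_1/H_1,\dots,m_l/H_l]\to\times(M)$. Top occurrence: a distinguished subtype occurrence $B$ is a top occurrence within $A$ if $A=B$; or $A=\times(M)$ and $B$ is a top occurrence within $lab(e_0)$ for some $e_0\in E_M$; or $A=N\div D$ and $B$ is a top occurrence within $N$. A primitive type $p$ is lonely in a type $A$ if for each top occurrence of $p$ within $A$ there is a subtype $\times(M)$ of $A$ with $|E_M|\ge 2$ and some $e_0\in E_M$ whose label $lab(e_0)=p$ is that top occurrence. A type $A$ is skeleton if $A=\times(M)$ with $E_M=\emptyset$ and $|ext_M|=|V_M|$. *)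

theory Defs
  imports Main "HOL-Library.Nat_Bijection"
begin

section \<open>Hypergraphs (concrete representatives; isomorphic graphs are identified via giso)\<close>

text \<open>A graph: a set of nodes, a list of edges (edge identity = list index), each edge
  being a pair (label, attachment string), and the string of external nodes.\<close>
datatype 'l hgraph = HG (hV: "nat set") (hE: "('l \<times> nat list) list") (hext: "nat list")

definition wf_graph :: "'l hgraph \<Rightarrow> bool" where
  "wf_graph G \<longleftrightarrow> finite (hV G) \<and> distinct (hext G) \<and> set (hext G) \<subseteq> hV G \<and>
     (\<forall>l a. (l, a) \<in> set (hE G) \<longrightarrow> distinct a \<and> set a \<subseteq> hV G)"

definition giso :: "('a \<Rightarrow> 'b \<Rightarrow> bool) \<Rightarrow> 'a hgraph \<Rightarrow> 'b hgraph \<Rightarrow> bool" where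
  "giso R G G' \<longleftrightarrow> (\<exists>f \<pi>. bij_betw f (hV G) (hV G') \<and> length (hE G) = length (hE G') \<and>
     bij_betw \<pi> {..<length (hE G)} {..<length (hE G')} \<and>
     (\<forall>i<length (hE G). R (fst (hE G ! i)) (fst (hE G' ! \<pi> i)) \<and>
         snd (hE G' ! \<pi> i) = map f (snd (hE G ! i))) \<and>
     hext G' = map f (hext G))"

lemma giso_mono[mono]: "(\<And>x y. R x y \<longrightarrow> S x y) \<Longrightarrow> giso R G G' \<longrightarrow> giso S G G'"
  unfolding giso_def by blast

definition list_idx :: "'a list \<Rightarrow> 'a \<Rightarrow> nat" where
  "list_idx xs v = (LEAST j. j < length xs \<and> xs ! j = v)"

text \<open>Simultaneous replacement: every edge i with sub i = Some H is replaced by a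
  disjoint copy of H whose j-th external node is fused with the j-th attachment node of i.\<close>
definition fresh_base :: "'l hgraph \<Rightarrow> nat" where
  "fresh_base G = Suc (Max (insert 0 (hV G)))"

definition emb :: "'l hgraph \<Rightarrow> nat \<Rightarrow> 'l hgraph \<Rightarrow> nat \<Rightarrow> nat" where
  "emb G i H v = (if v \<in> set (hext H) then snd (hE G ! i) ! list_idx (hext H) v
                  else fresh_base G + prod_encode (i, v))"

definition subst :: "'l hgraph \<Rightarrow> (nat \<Rightarrow> 'l hgraph option) \<Rightarrow> 'l hgraph" where
  "subst G sub = HG
     (hV G \<union> (\<Union>i\<in>{..<length (hE G)}. case sub i of None \<Rightarrow> {} | Some H \<Rightarrow> emb G i H ` hV H))
     (concat (map (\<lambda>i. case sub i of None \<Rightarrow> [hE G ! i]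
                    | Some H \<Rightarrow> map (\<lambda>(l, a). (l, map (emb G i H) a)) (hE H))
              [0..<length (hE G)]))
     (hext G)"

definition handle :: "'l \<Rightarrow> nat \<Rightarrow> 'l hgraph" where
  "handle l n = HG {..<n} [(l, [0..<n])] [0..<n]"

text \<open>Prim a n: the primitive type named a of arity n (infinitely many of each arity).
  In Div N D, the edge labeled None is the \$-edge.\<close>
datatype ty = Prim nat nat | Div ty "ty option hgraph" | Times "ty hgraph"

definition arity :: "ty \<Rightarrow> nat" where
  "arity A = (case A of Prim a n \<Rightarrow> n
     | Div N D \<Rightarrow> (case find (\<lambda>x. fst x = None) (hE D) of Some x \<Rightarrow> length (snd x) | None \<Rightarrow> 0)
     | Times M \<Rightarrow> length (hext M))"

inductive wf_ty :: "ty \<Rightarrow> bool" where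
  "wf_ty (Prim a n)"
| "wf_ty N \<Longrightarrow> wf_graph D \<Longrightarrow> length (filter (\<lambda>x. fst x = None) (hE D)) = 1 \<Longrightarrow>
   (\<forall>T a. (Some T, a) \<in> set (hE D) \<longrightarrow> wf_ty T \<and> arity T = length a) \<Longrightarrow>
   arity N = length (hext D) \<Longrightarrow> wf_ty (Div N D)"
| "wf_graph M \<Longrightarrow> (\<forall>T a. (T, a) \<in> set (hE M) \<longrightarrow> wf_ty T \<and> arity T = length a) \<Longrightarrow>
   wf_ty (Times M)"

definition wf_tgraph :: "ty hgraph \<Rightarrow> bool" where
  "wf_tgraph G \<longleftrightarrow> wf_graph G \<and> (\<forall>T a. (T, a) \<in> set (hE G) \<longrightarrow> wf_ty T \<and> arity T = length a)"

inductive ty_eq :: "ty \<Rightarrow> ty \<Rightarrow> bool" where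
  "ty_eq (Prim a n) (Prim a n)"
| "ty_eq N N' \<Longrightarrow> giso (rel_option ty_eq) D D' \<Longrightarrow> ty_eq (Div N D) (Div N' D')"
| "giso ty_eq M M' \<Longrightarrow> ty_eq (Times M) (Times M')"
monos option.rel_mono_strong

definition dlab :: "ty \<Rightarrow> ty option hgraph \<Rightarrow> ty hgraph" where
  "dlab N D = map_hgraph (\<lambda>x. case x of None \<Rightarrow> Div N D | Some T \<Rightarrow> T) D"

inductive HL :: "ty hgraph \<Rightarrow> ty \<Rightarrow> bool" where
  ax: "HL (handle (Prim a n) n) (Prim a n)"
| divL: "wf_ty (Div N D) \<Longrightarrow> d0 < length (hE D) \<Longrightarrow> fst (hE D ! d0) = None \<Longrightarrow>
    HL H A \<Longrightarrow> e < length (hE H) \<Longrightarrow> fst (hE H ! e) = N \<Longrightarrow>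
    (\<forall>i<length (hE D). i \<noteq> d0 \<longrightarrow> HL (Hs i) (the (fst (hE D ! i)))) \<Longrightarrow>
    HL (subst H (\<lambda>j. if j = e then
          Some (subst (dlab N D) (\<lambda>i. if i < length (hE D) \<and> i \<noteq> d0 then Some (Hs i) else None))
        else None)) A"
| divR: "wf_ty (Div N D) \<Longrightarrow> d0 < length (hE D) \<Longrightarrow> fst (hE D ! d0) = None \<Longrightarrow>
    wf_tgraph F \<Longrightarrow> length (hext F) = length (snd (hE D ! d0)) \<Longrightarrow>
    HL (subst (dlab N D) (\<lambda>j. if j = d0 then Some F else None)) N \<Longrightarrow>
    HL F (Div N D)"
| timesL: "wf_tgraph G \<Longrightarrow> e < length (hE G) \<Longrightarrow> fst (hE G ! e) = Times F \<Longrightarrow>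
    HL (subst G (\<lambda>j. if j = e then Some F else None)) A \<Longrightarrow> HL G A"
| timesR: "wf_ty (Times M) \<Longrightarrow> (\<forall>i<length (hE M). HL (Hs i) (fst (hE M ! i))) \<Longrightarrow>
    HL (subst M (\<lambda>i. if i < length (hE M) then Some (Hs i) else None)) (Times M)"
| iso: "HL G A \<Longrightarrow> giso ty_eq G G' \<Longrightarrow> ty_eq A A' \<Longrightarrow> HL G' A'"

text \<open>Positions of subtype occurrences: TE i = label of edge i of the graph of a product,
  Num = numerator of a division, DE i = label of (non-\$) edge i of the denominator.\<close>
datatype step = TE nat | Num | DE nat

fun subty :: "ty \<Rightarrow> step list \<Rightarrow> ty option" where
  "subty A [] = Some A"
| "subty (Times M) (TE i # ps) = (if i < length (hE M) then subty (fst (hE M ! i)) ps else None)"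
| "subty (Div N D) (Num # ps) = subty N ps"
| "subty (Div N D) (DE i # ps) = (if i < length (hE D) then
      (case fst (hE D ! i) of Some T \<Rightarrow> subty T ps | None \<Rightarrow> None) else None)"
| "subty _ _ = None"

definition top_pos :: "step list \<Rightarrow> bool" where
  "top_pos ps \<longleftrightarrow> (\<forall>i. DE i \<notin> set ps)"

definition lonely :: "ty \<Rightarrow> ty \<Rightarrow> bool" where
  "lonely p A \<longleftrightarrow> (\<forall>ps. top_pos ps \<and> subty A ps = Some p \<longrightarrow>
     (\<exists>qs i M. ps = qs @ [TE i] \<and> subty A qs = Some (Times M) \<and> 2 \<le> length (hE M)))"

definition skeleton :: "ty \<Rightarrow> bool" where
  "skeleton A \<longleftrightarrow> (\<exists>M. A = Times M \<and> hE M = [] \<and> card (hV M) = length (hext M))"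

end

theory Submission
  imports Defs
begin

(* Induction on derivations: if G \<rightarrow> p is derivable for a primitive p and no edge label of G
   has a skeleton subtype, then either G is the handle p\<^sup>\<bullet> up to the names of its nodes, or
   some edge label of G exposes p, i.e. has a top occurrence of p that is the numerator of a
   division or an edge of a product with fewer than two edges.  Skeleton-freeness is needed
   only for the rule (\<times>\<rightarrow>): if G[e/F] is a handle and F has no edges, then F has no
   internal nodes, so \<times>(F) would be a skeleton.  For G = H either alternative exposes p
   in \<times>(H), which contradicts loneliness. *)

abbreviation subst_at :: "'l hgraph \<Rightarrow> nat \<Rightarrow> 'l hgraph \<Rightarrow> 'l hgraph" where
  "subst_at G e K \<equiv> subst G (\<lambda>j. if j = e then Some K else None)"

definition edge_labels :: "'l hgraph \<Rightarrow> 'l set" where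
  "edge_labels G = fst ` set (hE G)"

lemma edge_labels_conv_nth: "edge_labels G = (\<lambda>i. fst (hE G ! i)) ` {..<length (hE G)}"
  unfolding edge_labels_def by (metis image_image lessThan_atLeast0 set_map map_nth set_upt)

lemma edge_labels_subst:
  "edge_labels (subst G sub) =
     (\<Union>i<length (hE G). case sub i of None \<Rightarrow> {fst (hE G ! i)} | Some K \<Rightarrow> edge_labels K)"
  unfolding subst_def edge_labels_def hgraph.sel set_concat set_map image_Union image_image
  by (rule SUP_cong) (auto split: option.split simp: image_image case_prod_beta)

lemma edge_labels_subst_at:
  assumes "e < length (hE G)"
  shows "edge_labels (subst_at G e K) \<union> {fst (hE G ! e)} = edge_labels G \<union> edge_labels K"
  using assms unfolding edge_labels_subst edge_labels_conv_nth[of G] by (auto split: if_splits)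

lemma edge_labels_subset_subst_at:
  "e < length (hE G) \<Longrightarrow> edge_labels K \<subseteq> edge_labels (subst_at G e K)"
  unfolding edge_labels_subst by auto

lemma edge_label_in_subst:
  "i < length (hE G) \<Longrightarrow> sub i = None \<Longrightarrow> fst (hE G ! i) \<in> edge_labels (subst G sub)"
  unfolding edge_labels_subst by force

lemma length_hE_subst_ge:
  assumes "i < length (hE G)" "sub i = Some K"
  shows "length (hE K) \<le> length (hE (subst G sub))"
proof -
  let ?f = "\<lambda>i. case sub i of None \<Rightarrow> [hE G ! i]
                 | Some H \<Rightarrow> map (\<lambda>(l, a). (l, map (emb G i H) a)) (hE H)"
  have "length (?f i) \<in> set (map length (map ?f [0..<length (hE G)]))"
    using assms(1) by simp
  then have "length (?f i) \<le> length (concat (map ?f [0..<length (hE G)]))"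
    unfolding length_concat by (simp add: member_le_sum_list)
  then show ?thesis using assms(2) by (simp add: subst_def)
qed

lemma fresh_base_notin: "finite (hV G) \<Longrightarrow> fresh_base G + k \<notin> hV G"
  unfolding fresh_base_def by (metis Max_ge finite_insert insertI2 not_less_eq_eq le_add1)

lemma subst_at_edgeless_isolated:
  assumes "wf_graph G" "e < length (hE G)" "hE K = []" "v \<in> hV K" "v \<notin> set (hext K)"
  shows "emb G e K v \<in> hV (subst_at G e K)"
    and "(l, a) \<in> set (hE (subst_at G e K)) \<Longrightarrow> emb G e K v \<notin> set a"
proof -
  show "emb G e K v \<in> hV (subst_at G e K)"
    using assms(2,4) unfolding subst_def by force
next
  assume "(l, a) \<in> set (hE (subst_at G e K))"
  then have "(l, a) \<in> set (hE G)"
    using assms(3) by (auto simp: subst_def split: if_splits)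
  then have "set a \<subseteq> hV G" using assms(1) by (auto simp: wf_graph_def)
  moreover have "emb G e K v \<notin> hV G"
    using assms(1,5) fresh_base_notin[of G] by (simp add: emb_def wf_graph_def)
  ultimately show "emb G e K v \<notin> set a" by blast
qed

inductive_cases ty_eq_PrimE: "ty_eq (Prim a n) T"
inductive_cases ty_eq_PrimE': "ty_eq T (Prim a n)"
inductive_cases ty_eq_DivE: "ty_eq (Div N D) T"
inductive_cases ty_eq_TimesE: "ty_eq (Times M) T"
inductive_cases wf_ty_TimesE: "wf_ty (Times M)"

lemma giso_edge_labels:
  assumes "giso R G G'" "L \<in> edge_labels G"
  shows "\<exists>L' \<in> edge_labels G'. R L L'"
proof -
  from assms(1) obtain \<pi> where
    \<pi>: "bij_betw \<pi> {..<length (hE G)} {..<length (hE G')}"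
      "\<forall>i<length (hE G). R (fst (hE G ! i)) (fst (hE G' ! \<pi> i))"
    unfolding giso_def by blast
  from assms(2) obtain i where i: "i < length (hE G)" "L = fst (hE G ! i)"
    unfolding edge_labels_conv_nth by blast
  have "fst (hE G' ! \<pi> i) \<in> edge_labels G'"
    using \<pi>(1) i(1) unfolding edge_labels_conv_nth bij_betw_def by auto
  with \<pi>(2) i show ?thesis by blast
qed

lemma giso_length_hE: "giso R G G' \<Longrightarrow> length (hE G) = length (hE G')"
  unfolding giso_def by blast

inductive subtype_of :: "ty \<Rightarrow> ty \<Rightarrow> bool" where
  refl: "subtype_of T T"
| Num: "subtype_of S N \<Longrightarrow> subtype_of S (Div N D)"
| Den: "Some L \<in> edge_labels D \<Longrightarrow> subtype_of S L \<Longrightarrow> subtype_of S (Div N D)"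
| Times: "L \<in> edge_labels M \<Longrightarrow> subtype_of S L \<Longrightarrow> subtype_of S (Times M)"

lemma subtype_of_subty: "subtype_of S T \<Longrightarrow> \<exists>ps. subty T ps = Some S"
proof (induction rule: subtype_of.induct)
  case (refl T)
  have "subty T [] = Some T" by simp
  then show ?case ..
next
  case (Num S N D)
  then obtain ps where "subty (Div N D) (Num # ps) = Some S" by auto
  then show ?case ..
next
  case (Den L D S N)
  obtain i where "i < length (hE D)" "fst (hE D ! i) = Some L"
    using Den.hyps unfolding edge_labels_conv_nth by auto
  moreover obtain ps where "subty L ps = Some S" using Den.IH ..
  ultimately have "subty (Div N D) (DE i # ps) = Some S" by simp
  then show ?case ..
next
  case (Times L M S)
  obtain i where "i < length (hE M)" "fst (hE M ! i) = L"
    using Times.hyps unfolding edge_labels_conv_nth by auto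
  moreover obtain ps where "subty L ps = Some S" using Times.IH ..
  ultimately have "subty (Times M) (TE i # ps) = Some S" by simp
  then show ?case ..
qed

lemma subtype_of_ty_eq:
  "subtype_of S T \<Longrightarrow> ty_eq T T' \<Longrightarrow> \<exists>S'. subtype_of S' T' \<and> ty_eq S S'"
proof (induction arbitrary: T' rule: subtype_of.induct)
  case (refl T)
  then show ?case using subtype_of.refl by blast
next
  case (Num S N D)
  from Num.prems show ?case
    by (elim ty_eq_DivE) (use Num.IH subtype_of.Num in blast)
next
  case (Den L D S N)
  from Den.prems show ?case
  proof (elim ty_eq_DivE)
    fix N' D' assume T': "T' = Div N' D'" "giso (rel_option ty_eq) D D'"
    obtain L' where "Some L' \<in> edge_labels D'" "ty_eq L L'"
      using giso_edge_labels[OF T'(2) Den.hyps(1)] by (auto simp: option_rel_Some1)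
    with Den.IH T'(1) show ?thesis using subtype_of.Den by blast
  qed
next
  case (Times L M S)
  from Times.prems show ?case
  proof (elim ty_eq_TimesE)
    fix M' assume T': "T' = Times M'" "giso ty_eq M M'"
    obtain L' where "L' \<in> edge_labels M'" "ty_eq L L'"
      using giso_edge_labels[OF T'(2) Times.hyps(1)] by blast
    with Times.IH T'(1) show ?thesis using subtype_of.Times by blast
  qed
qed

lemma skeleton_ty_eq: "skeleton S \<Longrightarrow> ty_eq S S' \<Longrightarrow> skeleton S'"
proof -
  assume "skeleton S" "ty_eq S S'"
  then obtain M M' where M: "hE M = []" "card (hV M) = length (hext M)"
    and S': "S' = Times M'" and iso: "giso ty_eq M M'"
    unfolding skeleton_def by (auto elim: ty_eq_TimesE)
  from iso obtain f where "bij_betw f (hV M) (hV M')" "length (hE M) = length (hE M')"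
    "hext M' = map f (hext M)"
    unfolding giso_def by blast
  with M S' show ?thesis by (simp add: skeleton_def bij_betw_same_card)
qed

(* Only proper occurrences count, so that exposure, unlike the failure of loneliness,
   propagates to every product containing the exposing label. *)
inductive exposed :: "ty \<Rightarrow> ty \<Rightarrow> bool" for p where
  Div_num: "exposed p (Div p D)"
| Div: "exposed p N \<Longrightarrow> exposed p (Div N D)"
| Times_sparse: "p \<in> edge_labels M \<Longrightarrow> length (hE M) < 2 \<Longrightarrow> exposed p (Times M)"
| Times: "L \<in> edge_labels M \<Longrightarrow> exposed p L \<Longrightarrow> exposed p (Times M)"

lemma exposed_top_path:
  "exposed p T \<Longrightarrow> \<exists>ps. ps \<noteq> [] \<and> top_pos ps \<and> subty T ps = Some p \<and>
     (\<forall>qs i M. ps = qs @ [TE i] \<and> subty T qs = Some (Times M) \<longrightarrow> length (hE M) < 2)"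
proof (induction rule: exposed.induct)
  case (Div_num D)
  show ?case
    by (rule exI[of _ "[Num]"]) (auto simp: top_pos_def Cons_eq_append_conv)
next
  case (Div N D)
  then obtain ps where "ps \<noteq> []" "top_pos ps" "subty N ps = Some p"
    "\<forall>qs i M. ps = qs @ [TE i] \<and> subty N qs = Some (Times M) \<longrightarrow> length (hE M) < 2"
    by blast
  then show ?case
    by (intro exI[of _ "Num # ps"]) (auto simp: top_pos_def Cons_eq_append_conv)
next
  case (Times_sparse M)
  obtain i where "i < length (hE M)" "fst (hE M ! i) = p"
    using Times_sparse.hyps(1) unfolding edge_labels_conv_nth by auto
  with Times_sparse.hyps(2) show ?case
    by (intro exI[of _ "[TE i]"]) (auto simp: top_pos_def Cons_eq_append_conv)
next
  case (Times L M)
  obtain i where "i < length (hE M)" "fst (hE M ! i) = L"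
    using Times.hyps(1) unfolding edge_labels_conv_nth by auto
  moreover obtain ps where "ps \<noteq> []" "top_pos ps" "subty L ps = Some p"
    "\<forall>qs i M. ps = qs @ [TE i] \<and> subty L qs = Some (Times M) \<longrightarrow> length (hE M) < 2"
    using Times.IH by blast
  ultimately show ?case
    by (intro exI[of _ "TE i # ps"]) (auto simp: top_pos_def Cons_eq_append_conv)
qed

lemma exposed_not_lonely: "exposed p T \<Longrightarrow> \<not> lonely p T"
  unfolding lonely_def by (fastforce dest: exposed_top_path)

lemma exposed_ty_eq: "exposed (Prim a n) T \<Longrightarrow> ty_eq T T' \<Longrightarrow> exposed (Prim a n) T'"
proof (induction arbitrary: T' rule: exposed.induct)
  case (Div_num D)
  then show ?case by (auto elim!: ty_eq_DivE ty_eq_PrimE intro: exposed.Div_num)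
next
  case (Div N D)
  then show ?case by (auto elim!: ty_eq_DivE intro: exposed.Div)
next
  case (Times_sparse M)
  from Times_sparse.prems show ?case
  proof (elim ty_eq_TimesE)
    fix M' assume T': "T' = Times M'" "giso ty_eq M M'"
    have "Prim a n \<in> edge_labels M'"
      using giso_edge_labels[OF T'(2) Times_sparse.hyps(1)] by (auto elim: ty_eq_PrimE)
    with T' Times_sparse.hyps(2) show ?thesis
      by (simp add: giso_length_hE exposed.Times_sparse)
  qed
next
  case (Times L M)
  from Times.prems show ?case
  proof (elim ty_eq_TimesE)
    fix M' assume T': "T' = Times M'" "giso ty_eq M M'"
    obtain L' where "L' \<in> edge_labels M'" "ty_eq L L'"
      using giso_edge_labels[OF T'(2) Times.hyps(1)] by blast
    with T'(1) Times.IH show ?thesis by (blast intro: exposed.Times)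
  qed
qed

definition skeleton_free :: "ty hgraph \<Rightarrow> bool" where
  "skeleton_free G \<longleftrightarrow> (\<forall>L \<in> edge_labels G. \<forall>S. subtype_of S L \<longrightarrow> \<not> skeleton S)"

definition has_exposed_label :: "ty \<Rightarrow> ty hgraph \<Rightarrow> bool" where
  "has_exposed_label p G \<longleftrightarrow> (\<exists>L \<in> edge_labels G. exposed p L)"

definition handle_like :: "ty \<Rightarrow> ty hgraph \<Rightarrow> bool" where
  "handle_like p G \<longleftrightarrow> (\<exists>a. hE G = [(p, a)] \<and> hV G = set a)"

lemma skeleton_free_giso: "giso ty_eq G G' \<Longrightarrow> skeleton_free G' \<Longrightarrow> skeleton_free G"
  unfolding skeleton_free_def
  by (metis giso_edge_labels skeleton_ty_eq subtype_of_ty_eq)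

lemma has_exposed_label_giso:
  "giso ty_eq G G' \<Longrightarrow> has_exposed_label (Prim a n) G \<Longrightarrow> has_exposed_label (Prim a n) G'"
  unfolding has_exposed_label_def by (metis giso_edge_labels exposed_ty_eq)

lemma handle_like_giso:
  assumes iso: "giso ty_eq G G'" and "handle_like (Prim a n) G"
  shows "handle_like (Prim a n) G'"
proof -
  from assms(2) obtain xs where xs: "hE G = [(Prim a n, xs)]" "hV G = set xs"
    unfolding handle_like_def by blast
  from iso obtain f \<pi> where f: "bij_betw f (hV G) (hV G')"
    and len: "length (hE G) = length (hE G')"
    and \<pi>: "bij_betw \<pi> {..<length (hE G)} {..<length (hE G')}"
    and edge: "\<forall>i<length (hE G). ty_eq (fst (hE G ! i)) (fst (hE G' ! \<pi> i)) \<and>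
                 snd (hE G' ! \<pi> i) = map f (snd (hE G ! i))"
    unfolding giso_def by blast
  obtain x' where G': "hE G' = [x']" using len xs(1) by (cases "hE G'") auto
  have "\<pi> 0 = 0" using \<pi> xs(1) G' by (auto simp: bij_betw_def)
  then have "x' = (Prim a n, map f xs)"
    using edge xs(1) G' by (cases x') (auto elim: ty_eq_PrimE)
  moreover have "hV G' = set (map f xs)" using f xs(2) by (simp add: bij_betw_def)
  ultimately show ?thesis using G' unfolding handle_like_def by blast
qed

lemma dlab_dollar_edge:
  "fst (hE D ! d0) = None \<Longrightarrow> d0 < length (hE D) \<Longrightarrow> fst (hE (dlab N D) ! d0) = Div N D"
  unfolding dlab_def by (simp add: hgraph.map_sel)

lemma length_hE_dlab: "length (hE (dlab N D)) = length (hE D)"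
  unfolding dlab_def by (simp add: hgraph.map_sel)

lemma skeleton_free_subst_at_Div:
  assumes "e < length (hE H)" "fst (hE H ! e) = N" "Div N D \<in> edge_labels K"
    and "skeleton_free (subst_at H e K)"
  shows "skeleton_free H"
proof -
  have "edge_labels H \<subseteq> edge_labels (subst_at H e K) \<union> {N}"
    using edge_labels_subst_at[OF assms(1)] assms(2) by blast
  moreover have "Div N D \<in> edge_labels (subst_at H e K)"
    using edge_labels_subset_subst_at[OF assms(1)] assms(3) by blast
  ultimately show ?thesis
    using assms(4) unfolding skeleton_free_def by (blast intro: subtype_of.Num)
qed

lemma has_exposed_label_subst_at_Div:
  assumes "e < length (hE H)" "fst (hE H ! e) = N" "Div N D \<in> edge_labels K"
    and "handle_like p H \<or> has_exposed_label p H"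
  shows "has_exposed_label p (subst_at H e K)"
proof -
  have labels: "edge_labels H \<subseteq> edge_labels (subst_at H e K) \<union> {N}"
    using edge_labels_subst_at[OF assms(1)] assms(2) by blast
  have Div: "Div N D \<in> edge_labels (subst_at H e K)"
    using edge_labels_subset_subst_at[OF assms(1)] assms(3) by blast
  from assms(4) show ?thesis
  proof
    assume "handle_like p H"
    then have "N = p" using assms(1,2) unfolding handle_like_def by auto
    then show ?thesis using Div exposed.Div_num unfolding has_exposed_label_def by blast
  next
    assume "has_exposed_label p H"
    then show ?thesis
      using labels Div exposed.Div unfolding has_exposed_label_def by blast
  qed
qed

lemma skeleton_free_subst_at_Times:
  assumes "e < length (hE G)" "fst (hE G ! e) = Times F" "skeleton_free G"
  shows "skeleton_free (subst_at G e F)"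
proof -
  have "Times F \<in> edge_labels G"
    using assms(1,2) unfolding edge_labels_conv_nth by force
  moreover have "edge_labels (subst_at G e F) \<subseteq> edge_labels G \<union> edge_labels F"
    using edge_labels_subst_at[OF assms(1)] by blast
  ultimately show ?thesis
    using assms(3) unfolding skeleton_free_def by (blast intro: subtype_of.Times)
qed

lemma skeleton_if_handle_like_subst_at:
  assumes "wf_graph G" "wf_graph F" "e < length (hE G)" "hE F = []"
    and "handle_like p (subst_at G e F)"
  shows "skeleton (Times F)"
proof -
  have "v \<in> set (hext F)" if "v \<in> hV F" for v
  proof (rule ccontr)
    assume "v \<notin> set (hext F)"
    note isolated = subst_at_edgeless_isolated[OF assms(1,3,4) \<open>v \<in> hV F\<close> this]
    from assms(5) obtain a where "hE (subst_at G e F) = [(p, a)]" "hV (subst_at G e F) = set a"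
      unfolding handle_like_def by blast
    with isolated show False by auto
  qed
  then have "hV F = set (hext F)" using assms(2) unfolding wf_graph_def by blast
  then have "card (hV F) = length (hext F)"
    using assms(2) distinct_card unfolding wf_graph_def by metis
  with assms(4) show ?thesis unfolding skeleton_def by simp
qed

lemma exposed_if_handle_like_subst_at:
  assumes "e < length (hE G)" "hE F \<noteq> []" "handle_like p (subst_at G e F)"
  shows "exposed p (Times F)"
proof (rule exposed.Times_sparse)
  from assms(3) obtain a where a: "hE (subst_at G e F) = [(p, a)]"
    unfolding handle_like_def by blast
  have "edge_labels F \<subseteq> {p}"
    using edge_labels_subset_subst_at[OF assms(1), of F] a by (simp add: edge_labels_def)
  then show "p \<in> edge_labels F" using assms(2) by (auto simp: edge_labels_def neq_Nil_conv)
  have "length (hE F) \<le> length (hE (subst_at G e F))"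
    using assms(1) by (intro length_hE_subst_ge) auto
  then show "length (hE F) < 2" using a by simp
qed

lemma has_exposed_label_subst_at_Times:
  assumes "wf_tgraph G" "e < length (hE G)" "fst (hE G ! e) = Times F" "skeleton_free G"
    and "handle_like p (subst_at G e F) \<or> has_exposed_label p (subst_at G e F)"
  shows "has_exposed_label p G"
proof -
  have Times: "Times F \<in> edge_labels G"
    using assms(2,3) unfolding edge_labels_conv_nth by force
  have "wf_ty (Times F)"
    using assms(1) Times unfolding wf_tgraph_def edge_labels_def by auto
  then have wf: "wf_graph G" "wf_graph F"
    using assms(1) unfolding wf_tgraph_def by (auto elim: wf_ty_TimesE)
  have "exposed p (Times F)" if "handle_like p (subst_at G e F)"
  proof (cases "hE F = []")
    case True
    then have "skeleton (Times F)"
      using skeleton_if_handle_like_subst_at[OF wf assms(2)] that by blast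
    then show ?thesis
      using assms(4) Times subtype_of.refl unfolding skeleton_free_def by blast
  next
    case False
    then show ?thesis using exposed_if_handle_like_subst_at[OF assms(2)] that by blast
  qed
  moreover have "edge_labels (subst_at G e F) \<subseteq> edge_labels G \<union> edge_labels F"
    using edge_labels_subst_at[OF assms(2)] by blast
  ultimately show ?thesis
    using assms(5) Times unfolding has_exposed_label_def by (blast intro: exposed.Times)
qed

lemma HL_Prim_handle_like_or_exposed:
  "HL G A \<Longrightarrow> A = Prim a n \<Longrightarrow> skeleton_free G \<Longrightarrow>
     handle_like (Prim a n) G \<or> has_exposed_label (Prim a n) G"
proof (induction rule: HL.induct)
  case (ax a n)
  then show ?case unfolding handle_like_def handle_def by auto
next
  case (divL N D d0 H A e Hs)
  let ?K = "subst (dlab N D) (\<lambda>i. if i < length (hE D) \<and> i \<noteq> d0 then Some (Hs i) else None)"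
  have Div: "Div N D \<in> edge_labels ?K"
    using edge_label_in_subst[of d0 "dlab N D"] divL.hyps(2,3)
    by (simp add: dlab_dollar_edge length_hE_dlab)
  have "skeleton_free H"
    using skeleton_free_subst_at_Div[OF divL.hyps(5,6) Div] divL.prems(2) by blast
  with divL.IH(1) divL.prems(1) show ?case
    using has_exposed_label_subst_at_Div[OF divL.hyps(5,6) Div] by blast
next
  case (timesL G e F A)
  with skeleton_free_subst_at_Times show ?case
    using has_exposed_label_subst_at_Times by blast
next
  case (iso G A G' A')
  then have "A = Prim a n" by (auto elim: ty_eq_PrimE')
  with iso show ?case
    using skeleton_free_giso handle_like_giso has_exposed_label_giso by blast
qed simp_all

theorem lemma1:
  fixes H :: "ty hgraph" and a n :: nat
  assumes "wf_ty (Times H)"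
    and "lonely (Prim a n) (Times H)"
    and "\<forall>ps T. subty (Times H) ps = Some T \<longrightarrow> \<not> skeleton T"
  shows "\<not> HL H (Prim a n)"
proof
  assume "HL H (Prim a n)"
  moreover have "skeleton_free H"
    using assms(3) unfolding skeleton_free_def
    by (metis subtype_of.Times subtype_of_subty)
  ultimately have "handle_like (Prim a n) H \<or> has_exposed_label (Prim a n) H"
    using HL_Prim_handle_like_or_exposed by blast
  then have "exposed (Prim a n) (Times H)"
  proof
    assume "handle_like (Prim a n) H"
    then show ?thesis
      unfolding handle_like_def by (auto simp: edge_labels_def intro: exposed.Times_sparse)
  next
    assume "has_exposed_label (Prim a n) H"
    then show ?thesis unfolding has_exposed_label_def by (blast intro: exposed.Times)
  qed
  with assms(2) show False using exposed_not_lonely by blast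
qed

end
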